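(* Suppose all type sets are equal, $\Theta_i=\Theta_0$ for all $i$, and let $h=(h_1,\dots,h_n)$ determine a Groves mechanism (for an efficient decision function $f$). Define $h':\Theta_0^{n-1}\to\mathbb{R}$ by $$h'(x):=\frac{1}{n!}\sum_{\pi\in\Pi(n-1)}\sum_{j=1}^n h_j(x^\pi),$$ where $\Pi(n-1)$ is the set of permutations of $\{1,\dots,n-1\}$ and $x^\pi_i:=x_{\pi^{-1}(i)}$; $h'$ determines an anonymous Groves mechanism. Let $G(\theta):=\sum_{j=1}^n v_j(f(\theta),\theta_j)$ and assume $G(\theta)=G(\theta^\pi)$ for all $\theta\in\Theta$ and all permutations $\pi$ of $\{1,\dots,n\}$ (where $\theta^\pi_i:=\theta_{\pi^{-1}(i)}$). Then: (i) if the Groves mechanism $h$ is feasible, so is $h'$; (ii) if an anonymous Groves mechanism $h^0$ is welfare dominated by $h$, then $h^0$ is welfare dominated by $h'$.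
   Context: Setting: decisions $D$, players $1,\dots,n$ ($n\ge 2$), type sets $\Theta_i$, $\Theta=\prod_i\Theta_i$, initial utilities $v_i:D\times\Theta_i\to\mathbb{R}$; a tax-based mechanism $(f,t)$ gives player $i$ final utility $v_i(f(\theta),\theta_i)+t_i(\theta)$. A Groves mechanism has $f(\theta)\in\arg\max_{d\in D}\sum_i v_i(d,\theta_i)$ and $t_i(\theta)=\sum_{j\ne i}v_j(f(\theta),\theta_j)+h_i(\theta_{-i})$ for arbitrary functions $h_i$ of the other players' types; it is identified with $(h_1,\dots,h_n)$. It is anonymous if all $\Theta_i$ are equal and all $h_i$ equal a single function $h$ that is permutation independent (symmetric in its $n-1$ arguments). A mechanism is feasible if $\sum_i t_i(\theta)\le 0$ for all $\theta$. For mechanisms with the same decision function, $t'$ welfare dominates $t$ if $\sum_i t_i(\theta)\le\sum_i t'_i(\theta)$ for all $\theta$, with strict inequality for some $\theta$. *)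

theory Defs
  imports Complex_Main "HOL-Combinatorics.Permutations"
begin

text \<open>Players are indexed 0,...,n-1; a type profile is a list of length n.
  All type sets equal the common set Theta0.\<close>

definition profiles :: "'t set \<Rightarrow> nat \<Rightarrow> 't list set" where
  "profiles Theta0 m = {x. length x = m \<and> set x \<subseteq> Theta0}"

definition minus_i :: "nat \<Rightarrow> 't list \<Rightarrow> 't list" where
  "minus_i i \<theta> = take i \<theta> @ drop (Suc i) \<theta>"

definition perm_list :: "(nat \<Rightarrow> nat) \<Rightarrow> 't list \<Rightarrow> 't list" where
  "perm_list \<pi> x = map (\<lambda>i. x ! inv \<pi> i) [0..<length x]"

definition total_util :: "(nat \<Rightarrow> 'd \<Rightarrow> 't \<Rightarrow> real) \<Rightarrow> nat \<Rightarrow> 'd \<Rightarrow> 't list \<Rightarrow> real" where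
  "total_util v n d \<theta> = (\<Sum>j<n. v j d (\<theta> ! j))"

definition efficient :: "'d set \<Rightarrow> 't set \<Rightarrow> (nat \<Rightarrow> 'd \<Rightarrow> 't \<Rightarrow> real) \<Rightarrow> nat \<Rightarrow> ('t list \<Rightarrow> 'd) \<Rightarrow> bool" where
  "efficient D Theta0 v n f \<longleftrightarrow>
     (\<forall>\<theta>\<in>profiles Theta0 n. f \<theta> \<in> D \<and> (\<forall>d\<in>D. total_util v n d \<theta> \<le> total_util v n (f \<theta>) \<theta>))"

definition groves_tax :: "(nat \<Rightarrow> 'd \<Rightarrow> 't \<Rightarrow> real) \<Rightarrow> nat \<Rightarrow> ('t list \<Rightarrow> 'd)
      \<Rightarrow> (nat \<Rightarrow> 't list \<Rightarrow> real) \<Rightarrow> 't list \<Rightarrow> nat \<Rightarrow> real" where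
  "groves_tax v n f h \<theta> i = (\<Sum>j\<in>{..<n} - {i}. v j (f \<theta>) (\<theta> ! j)) + h i (minus_i i \<theta>)"

definition feasible :: "'t set \<Rightarrow> nat \<Rightarrow> ('t list \<Rightarrow> nat \<Rightarrow> real) \<Rightarrow> bool" where
  "feasible Theta0 n t \<longleftrightarrow> (\<forall>\<theta>\<in>profiles Theta0 n. (\<Sum>i<n. t \<theta> i) \<le> 0)"

definition welfare_dominates :: "'t set \<Rightarrow> nat \<Rightarrow> ('t list \<Rightarrow> nat \<Rightarrow> real) \<Rightarrow> ('t list \<Rightarrow> nat \<Rightarrow> real) \<Rightarrow> bool" where
  "welfare_dominates Theta0 n t' t \<longleftrightarrow>
     (\<forall>\<theta>\<in>profiles Theta0 n. (\<Sum>i<n. t \<theta> i) \<le> (\<Sum>i<n. t' \<theta> i)) \<and>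
     (\<exists>\<theta>\<in>profiles Theta0 n. (\<Sum>i<n. t \<theta> i) < (\<Sum>i<n. t' \<theta> i))"

definition perm_independent :: "'t set \<Rightarrow> nat \<Rightarrow> ('t list \<Rightarrow> real) \<Rightarrow> bool" where
  "perm_independent Theta0 n g \<longleftrightarrow>
     (\<forall>x\<in>profiles Theta0 (n - 1). \<forall>\<pi>. \<pi> permutes {..<n - 1} \<longrightarrow> g (perm_list \<pi> x) = g x)"

definition sym_h :: "nat \<Rightarrow> (nat \<Rightarrow> 't list \<Rightarrow> real) \<Rightarrow> 't list \<Rightarrow> real" where
  "sym_h n h x = (1 / fact n) * (\<Sum>\<pi>\<in>{\<pi>. \<pi> permutes {..<n - 1}}. \<Sum>j<n. h j (perm_list \<pi> x))"

end

theory Submission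
  imports Defs
begin

(* The tax revenue of a Groves mechanism with correction terms h_j is
     (n - 1) * G(theta) + sum_i h_i(theta_{-i}),
   so by symmetry of G only the second summand changes when h is replaced by
   the symmetrisation h' = sym_h n h.  The heart of the proof is the
   double-counting identity
     sum_{i<n} sum_{pi in Pi(n-1)} F((theta_{-i})^pi) = sum_{sigma in Pi(n)} F((theta^sigma)_{-j}),
   obtained from an explicit bijection {..<n} x Pi(n-1) -> Pi(n) that sends
   (i, mu) to the permutation moving position j to i and acting by mu on the
   remaining positions.  It shows that the revenue of h' at theta is the average
   of the revenue of h over all permutations of theta, while an anonymous
   mechanism equals its own average.  Feasibility and welfare dominance are
   preserved by averaging, which gives (i) and (ii). *)

text \<open>Position a of a list with entry k deleted is position \<open>shift_idx k a\<close> of the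
  original list; \<open>unshift_idx k\<close> is the inverse map away from k.\<close>

definition shift_idx :: "nat \<Rightarrow> nat \<Rightarrow> nat" where
  "shift_idx k a = (if a < k then a else Suc a)"

definition unshift_idx :: "nat \<Rightarrow> nat \<Rightarrow> nat" where
  "unshift_idx k a = (if a < k then a else a - 1)"

text \<open>\<open>reindex \<rho> x\<close> is the list \<open>x \<circ> \<rho>\<close>; \<open>perm_list \<pi>\<close> is \<open>reindex (inv \<pi>)\<close>.\<close>

definition reindex :: "(nat \<Rightarrow> nat) \<Rightarrow> 't list \<Rightarrow> 't list" where
  "reindex \<rho> x = map (\<lambda>b. x ! \<rho> b) [0..<length x]"

text \<open>The permutation of \<open>{..<n}\<close> sending j to i and acting as \<open>\<mu>\<close> on the
  remaining positions, after renumbering them to \<open>{..<n-1}\<close> on both sides.\<close>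

definition extend_perm :: "nat \<Rightarrow> nat \<Rightarrow> nat \<times> (nat \<Rightarrow> nat) \<Rightarrow> nat \<Rightarrow> nat" where
  "extend_perm n j = (\<lambda>(i, \<mu>) a.
     if a = j then i else if a < n then shift_idx i (\<mu> (unshift_idx j a)) else a)"

lemma shift_unshift_idx [simp]: "a \<noteq> k \<Longrightarrow> shift_idx k (unshift_idx k a) = a"
  by (auto simp: shift_idx_def unshift_idx_def)

lemma unshift_shift_idx [simp]: "unshift_idx k (shift_idx k a) = a"
  by (auto simp: shift_idx_def unshift_idx_def)

lemma shift_idx_neq [simp]: "shift_idx k a \<noteq> k" "k \<noteq> shift_idx k a"
  by (auto simp: shift_idx_def)

lemma shift_idx_less: "a < n - 1 \<Longrightarrow> k < n \<Longrightarrow> shift_idx k a < n"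
  by (auto simp: shift_idx_def)

lemma unshift_idx_less: "a < n \<Longrightarrow> a \<noteq> k \<Longrightarrow> k < n \<Longrightarrow> unshift_idx k a < n - 1"
  by (auto simp: unshift_idx_def)

lemma inj_shift_idx: "inj (shift_idx k)"
  by (metis injI unshift_shift_idx)

lemma length_minus_i: "i < length \<theta> \<Longrightarrow> length (minus_i i \<theta>) = length \<theta> - 1"
  by (auto simp: minus_i_def)

lemma nth_minus_i:
  "i < length \<theta> \<Longrightarrow> m < length \<theta> - 1 \<Longrightarrow> minus_i i \<theta> ! m = \<theta> ! shift_idx i m"
  by (auto simp: minus_i_def shift_idx_def nth_append min_def)

lemma perm_list_inv_eq_reindex: "\<pi> permutes S \<Longrightarrow> perm_list (inv \<pi>) x = reindex \<pi> x"
  by (simp add: perm_list_def reindex_def permutes_inv_inv)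

lemma extend_perm_permutes:
  assumes "j < n" "i < n" "\<mu> permutes {..<n - 1}"
  shows "extend_perm n j (i, \<mu>) permutes {..<n}"
proof (rule inj_imp_permutes)
  have \<mu>_in: "\<mu> a < n - 1" if "a < n - 1" for a
    using assms(3) that permutes_in_image by fastforce
  show "extend_perm n j (i, \<mu>) a \<in> {..<n}" if "a \<in> {..<n}" for a
    using that assms \<mu>_in[OF unshift_idx_less[of a n j]] shift_idx_less
    by (auto simp: extend_perm_def)
  show "inj_on (extend_perm n j (i, \<mu>)) {..<n}"
  proof (rule inj_onI)
    fix a b assume "a \<in> {..<n}" "b \<in> {..<n}"
      and eq: "extend_perm n j (i, \<mu>) a = extend_perm n j (i, \<mu>) b"
    then consider "a = j" "b = j" | "a \<noteq> j" "b \<noteq> j"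
      "\<mu> (unshift_idx j a) = \<mu> (unshift_idx j b)"
      by (auto simp: extend_perm_def dest: injD[OF inj_shift_idx] split: if_splits)
    then show "a = b"
    proof cases
      case 2
      then show ?thesis by (metis shift_unshift_idx permutes_inj[OF assms(3)] injD)
    qed simp
  qed
qed (use assms in \<open>auto simp: extend_perm_def\<close>)

text \<open>\<open>extend_perm n j\<close> is injective on pairs; with a cardinality count
  (\<open>n * (n-1)! = n!\<close>) this makes it a bijection onto the permutations of \<open>{..<n}\<close>.\<close>

lemma extend_perm_inj_on:
  assumes "j < n"
  shows "inj_on (extend_perm n j) ({..<n} \<times> {\<mu>. \<mu> permutes {..<n - 1}})"
proof (rule inj_onI)
  fix x y assume "x \<in> {..<n} \<times> {\<mu>. \<mu> permutes {..<n - 1}}"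
    "y \<in> {..<n} \<times> {\<mu>. \<mu> permutes {..<n - 1}}"
    and eq: "extend_perm n j x = extend_perm n j y"
  then obtain i i' \<mu> \<mu>' where xy: "x = (i, \<mu>)" "y = (i', \<mu>')"
    and \<mu>: "\<mu> permutes {..<n - 1}" and \<mu>': "\<mu>' permutes {..<n - 1}"
    by auto
  from fun_cong[OF eq, of j] have "i = i'"
    by (simp add: xy extend_perm_def)
  moreover have "\<mu> m = \<mu>' m" for m
  proof (cases "m < n - 1")
    case True
    then have "shift_idx j m < n" using assms by (simp add: shift_idx_less)
    with fun_cong[OF eq, of "shift_idx j m"] \<open>i = i'\<close> show ?thesis
      by (simp add: xy extend_perm_def injD[OF inj_shift_idx])
  next
    case False
    then show ?thesis using \<mu> \<mu>' by (simp add: permutes_not_in)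
  qed
  ultimately show "x = y" by (auto simp: xy)
qed

lemma extend_perm_bij:
  assumes "j < n"
  shows "bij_betw (extend_perm n j) ({..<n} \<times> {\<mu>. \<mu> permutes {..<n - 1}}) {\<rho>. \<rho> permutes {..<n}}"
proof -
  let ?A = "{..<n} \<times> {\<mu>. \<mu> permutes {..<n - 1}}"
  have sub: "extend_perm n j ` ?A \<subseteq> {\<rho>. \<rho> permutes {..<n}}"
    using assms extend_perm_permutes by auto
  have "card (extend_perm n j ` ?A) = n * fact (n - 1)"
    using card_image[OF extend_perm_inj_on[OF assms]]
    by (simp add: card_cartesian_product card_permutations)
  also have "\<dots> = card {\<rho>. \<rho> permutes {..<n}}"
    using assms by (simp add: card_permutations fact_reduce[of n])
  finally have "extend_perm n j ` ?A = {\<rho>. \<rho> permutes {..<n}}"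
    using sub by (intro card_subset_eq) (simp_all add: finite_permutations)
  then show ?thesis
    using extend_perm_inj_on[OF assms] by (simp add: bij_betw_def)
qed

lemma minus_i_reindex_extend_perm:
  assumes "j < n" "i < n" "\<mu> permutes {..<n - 1}" "length \<theta> = n"
  shows "minus_i j (reindex (extend_perm n j (i, \<mu>)) \<theta>) = reindex \<mu> (minus_i i \<theta>)"
proof (rule nth_equalityI)
  show "length (minus_i j (reindex (extend_perm n j (i, \<mu>)) \<theta>)) = length (reindex \<mu> (minus_i i \<theta>))"
    using assms by (simp add: length_minus_i reindex_def)
next
  fix m assume "m < length (minus_i j (reindex (extend_perm n j (i, \<mu>)) \<theta>))"
  then have m: "m < n - 1"
    using assms by (simp add: length_minus_i reindex_def)
  have "\<mu> m < n - 1"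
    using assms(3) m permutes_in_image by fastforce
  then show "minus_i j (reindex (extend_perm n j (i, \<mu>)) \<theta>) ! m = reindex \<mu> (minus_i i \<theta>) ! m"
    using m assms shift_idx_less[OF m assms(1)]
    by (simp add: nth_minus_i reindex_def length_minus_i extend_perm_def)
qed

lemma sum_perms_minus_i:
  assumes "j < n" "length \<theta> = n"
  shows "(\<Sum>\<sigma>\<in>{\<sigma>. \<sigma> permutes {..<n}}. F (minus_i j (perm_list \<sigma> \<theta>)))
       = (\<Sum>i<n. \<Sum>\<pi>\<in>{\<pi>. \<pi> permutes {..<n - 1}}. F (perm_list \<pi> (minus_i i \<theta>)))"
proof -
  have "(\<Sum>\<sigma>\<in>{\<sigma>. \<sigma> permutes {..<n}}. F (minus_i j (perm_list \<sigma> \<theta>)))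
      = (\<Sum>\<rho>\<in>{\<rho>. \<rho> permutes {..<n}}. F (minus_i j (reindex \<rho> \<theta>)))"
    by (subst sum_permutations_inverse) (simp add: perm_list_inv_eq_reindex)
  also have "\<dots> = (\<Sum>(i, \<mu>)\<in>{..<n} \<times> {\<mu>. \<mu> permutes {..<n - 1}}.
                      F (minus_i j (reindex (extend_perm n j (i, \<mu>)) \<theta>)))"
    by (subst sum.reindex_bij_betw[symmetric, OF extend_perm_bij[OF assms(1)]]) (simp add: split_def)
  also have "\<dots> = (\<Sum>(i, \<mu>)\<in>{..<n} \<times> {\<mu>. \<mu> permutes {..<n - 1}}. F (reindex \<mu> (minus_i i \<theta>)))"
    by (rule sum.cong) (auto simp: minus_i_reindex_extend_perm assms)
  also have "\<dots> = (\<Sum>i<n. \<Sum>\<mu>\<in>{\<mu>. \<mu> permutes {..<n - 1}}. F (reindex \<mu> (minus_i i \<theta>)))"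
    by (simp add: sum.cartesian_product)
  also have "\<dots> = (\<Sum>i<n. \<Sum>\<pi>\<in>{\<pi>. \<pi> permutes {..<n - 1}}. F (perm_list \<pi> (minus_i i \<theta>)))"
    by (rule sum.cong[OF refl], subst (2) sum_permutations_inverse) (simp add: perm_list_inv_eq_reindex)
  finally show ?thesis .
qed

lemma perm_list_comp:
  assumes "\<pi> permutes {..<m}" "\<sigma> permutes {..<m}" "length x = m"
  shows "perm_list \<pi> (perm_list \<sigma> x) = perm_list (\<pi> \<circ> \<sigma>) x"
proof -
  have "inv \<pi> a < m" if "a < m" for a
    using permutes_inv[OF assms(1)] permutes_in_image that by fastforce
  moreover have "inv (\<pi> \<circ> \<sigma>) = inv \<sigma> \<circ> inv \<pi>"
    using o_inv_distrib permutes_bij assms(1,2) by blast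
  ultimately show ?thesis
    using assms(3) by (auto simp: perm_list_def)
qed

lemma perm_list_id: "perm_list id x = x"
  by (simp add: perm_list_def map_nth)

lemma perm_list_profiles:
  assumes "\<theta> \<in> profiles Theta0 n" "\<sigma> permutes {..<n}"
  shows "perm_list \<sigma> \<theta> \<in> profiles Theta0 n"
proof -
  have "inv \<sigma> i < n" if "i < n" for i
    using permutes_inv[OF assms(2)] permutes_in_image that by fastforce
  then show ?thesis
    using assms(1) by (auto simp: profiles_def perm_list_def)
qed

lemma minus_i_profiles:
  assumes "\<theta> \<in> profiles Theta0 n" "i < n"
  shows "minus_i i \<theta> \<in> profiles Theta0 (n - 1)"
proof -
  have "set (minus_i i \<theta>) \<subseteq> set \<theta>"
    unfolding minus_i_def by (auto dest: in_set_takeD in_set_dropD)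
  then show ?thesis
    using assms by (auto simp: profiles_def length_minus_i)
qed

abbreviation revenue :: "nat \<Rightarrow> ('t list \<Rightarrow> nat \<Rightarrow> real) \<Rightarrow> 't list \<Rightarrow> real" where
  "revenue n t \<theta> \<equiv> \<Sum>i<n. t \<theta> i"

text \<open>Revenue of a Groves mechanism: each player receives the utilities of all others.\<close>

lemma revenue_groves_tax:
  "revenue n (groves_tax v n f H) \<theta>
     = (real n - 1) * total_util v n (f \<theta>) \<theta> + (\<Sum>i<n. H i (minus_i i \<theta>))"
proof -
  have "revenue n (groves_tax v n f H) \<theta>
      = (\<Sum>i<n. total_util v n (f \<theta>) \<theta> - v i (f \<theta>) (\<theta> ! i)) + (\<Sum>i<n. H i (minus_i i \<theta>))"
    by (simp add: groves_tax_def sum.distrib sum_diff1 total_util_def)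
  also have "(\<Sum>i<n. total_util v n (f \<theta>) \<theta> - v i (f \<theta>) (\<theta> ! i))
           = real n * total_util v n (f \<theta>) \<theta> - total_util v n (f \<theta>) \<theta>"
    by (simp add: sum_subtractf total_util_def)
  finally show ?thesis
    by (simp add: algebra_simps)
qed

lemma sum_sym_h_minus_i:
  assumes "length \<theta> = n"
  shows "(\<Sum>i<n. sym_h n h (minus_i i \<theta>))
       = (\<Sum>\<sigma>\<in>{\<sigma>. \<sigma> permutes {..<n}}. \<Sum>j<n. h j (minus_i j (perm_list \<sigma> \<theta>))) / fact n"
proof -
  let ?P = "{\<pi>. \<pi> permutes {..<n - 1}}"
  have "(\<Sum>i<n. \<Sum>\<pi>\<in>?P. \<Sum>j<n. h j (perm_list \<pi> (minus_i i \<theta>)))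
      = (\<Sum>j<n. \<Sum>i<n. \<Sum>\<pi>\<in>?P. h j (perm_list \<pi> (minus_i i \<theta>)))"
    by (subst sum.swap) (rule sum.cong[OF refl], rule sum.swap)
  also have "\<dots> = (\<Sum>j<n. \<Sum>\<sigma>\<in>{\<sigma>. \<sigma> permutes {..<n}}. h j (minus_i j (perm_list \<sigma> \<theta>)))"
    using assms by (simp add: sum_perms_minus_i)
  also have "\<dots> = (\<Sum>\<sigma>\<in>{\<sigma>. \<sigma> permutes {..<n}}. \<Sum>j<n. h j (minus_i j (perm_list \<sigma> \<theta>)))"
    by (rule sum.swap)
  finally show ?thesis
    by (simp add: sym_h_def sum_divide_distrib[symmetric])
qed

definition welfare_symmetric :: "'t set \<Rightarrow> (nat \<Rightarrow> 'd \<Rightarrow> 't \<Rightarrow> real) \<Rightarrow> nat \<Rightarrow> ('t list \<Rightarrow> 'd) \<Rightarrow> bool" where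
  "welfare_symmetric Theta0 v n f \<longleftrightarrow>
     (\<forall>\<theta>\<in>profiles Theta0 n. \<forall>\<pi>. \<pi> permutes {..<n} \<longrightarrow>
        total_util v n (f \<theta>) \<theta> = total_util v n (f (perm_list \<pi> \<theta>)) (perm_list \<pi> \<theta>))"

definition perm_avg :: "nat \<Rightarrow> ('t list \<Rightarrow> real) \<Rightarrow> 't list \<Rightarrow> real" where
  "perm_avg n g \<theta> = (\<Sum>\<sigma>\<in>{\<sigma>. \<sigma> permutes {..<n}}. g (perm_list \<sigma> \<theta>)) / fact n"

text \<open>Averaging is monotone and preserves a strict inequality at a single profile,
  because the identity permutation occurs in the average.\<close>

lemma perm_avg_mono:
  assumes "\<forall>\<theta>\<in>profiles Theta0 n. g \<theta> \<le> g' \<theta>" "\<theta> \<in> profiles Theta0 n"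
  shows "perm_avg n g \<theta> \<le> perm_avg n g' \<theta>"
  unfolding perm_avg_def
  by (intro divide_right_mono sum_mono) (use assms perm_list_profiles in force)+

lemma perm_avg_strict_mono:
  assumes "\<forall>\<theta>\<in>profiles Theta0 n. g \<theta> \<le> g' \<theta>" "\<theta> \<in> profiles Theta0 n" "g \<theta> < g' \<theta>"
  shows "perm_avg n g \<theta> < perm_avg n g' \<theta>"
proof -
  have "(\<Sum>\<sigma>\<in>{\<sigma>. \<sigma> permutes {..<n}}. g (perm_list \<sigma> \<theta>))
      < (\<Sum>\<sigma>\<in>{\<sigma>. \<sigma> permutes {..<n}}. g' (perm_list \<sigma> \<theta>))"
  proof (rule sum_strict_mono_ex1)
    show "\<exists>\<sigma>\<in>{\<sigma>. \<sigma> permutes {..<n}}. g (perm_list \<sigma> \<theta>) < g' (perm_list \<sigma> \<theta>)"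
      using assms(3) permutes_id perm_list_id by (metis mem_Collect_eq)
  qed (use assms perm_list_profiles in \<open>force simp: finite_permutations\<close>)+
  then show ?thesis
    unfolding perm_avg_def by (simp add: divide_strict_right_mono)
qed

lemma revenue_sym_h:
  assumes "welfare_symmetric Theta0 v n f" "\<theta> \<in> profiles Theta0 n"
  shows "revenue n (groves_tax v n f (\<lambda>_. sym_h n h)) \<theta> = perm_avg n (revenue n (groves_tax v n f h)) \<theta>"
proof -
  let ?P = "{\<sigma>. \<sigma> permutes {..<n}}"
  let ?W = "total_util v n (f \<theta>) \<theta>"
  have W: "total_util v n (f (perm_list \<sigma> \<theta>)) (perm_list \<sigma> \<theta>) = ?W" if "\<sigma> permutes {..<n}" for \<sigma>
    using assms that by (simp add: welfare_symmetric_def)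
  have "(\<Sum>\<sigma>\<in>?P. revenue n (groves_tax v n f h) (perm_list \<sigma> \<theta>))
      = (\<Sum>\<sigma>\<in>?P. (real n - 1) * ?W + (\<Sum>j<n. h j (minus_i j (perm_list \<sigma> \<theta>))))"
    by (rule sum.cong[OF refl]) (simp add: revenue_groves_tax W)
  also have "\<dots> = fact n * ((real n - 1) * ?W)
                  + (\<Sum>\<sigma>\<in>?P. \<Sum>j<n. h j (minus_i j (perm_list \<sigma> \<theta>)))"
    by (simp add: sum.distrib card_permutations)
  finally show ?thesis
    using assms(2) unfolding perm_avg_def revenue_groves_tax
    by (simp add: sum_sym_h_minus_i profiles_def field_simps)
qed

lemma sym_h_anonymous:
  assumes "n \<ge> 1" "perm_independent Theta0 n h0" "x \<in> profiles Theta0 (n - 1)"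
  shows "sym_h n (\<lambda>_. h0) x = h0 x"
proof -
  have "sym_h n (\<lambda>_. h0) x = (\<Sum>\<pi>\<in>{\<pi>. \<pi> permutes {..<n - 1}}. real n * h0 x) / fact n"
    unfolding sym_h_def using assms(2,3) by (simp add: perm_independent_def)
  also have "\<dots> = real n * fact (n - 1) * h0 x / fact n"
    by (simp add: card_permutations)
  also have "\<dots> = h0 x"
    using assms(1) fact_reduce[of n, where 'a = real] by simp
  finally show ?thesis .
qed

lemma revenue_anonymous:
  assumes "n \<ge> 1" "welfare_symmetric Theta0 v n f" "perm_independent Theta0 n h0"
    and "\<theta> \<in> profiles Theta0 n"
  shows "revenue n (groves_tax v n f (\<lambda>_. h0)) \<theta> = perm_avg n (revenue n (groves_tax v n f (\<lambda>_. h0))) \<theta>"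
proof -
  have "revenue n (groves_tax v n f (\<lambda>_. h0)) \<theta> = revenue n (groves_tax v n f (\<lambda>_. sym_h n (\<lambda>_. h0))) \<theta>"
    using sym_h_anonymous[OF assms(1,3) minus_i_profiles[OF assms(4)]]
    by (simp add: revenue_groves_tax)
  also have "\<dots> = perm_avg n (revenue n (groves_tax v n f (\<lambda>_. h0))) \<theta>"
    using assms(2,4) by (rule revenue_sym_h)
  finally show ?thesis .
qed

text \<open>The symmetrised mechanism is anonymous: composing with a permutation only
  reorders the sum over \<open>\<Pi>(n-1)\<close>.\<close>

lemma sym_h_perm_independent: "perm_independent Theta0 n (sym_h n h)"
  unfolding perm_independent_def
proof (intro ballI allI impI)
  fix x and \<sigma> :: "nat \<Rightarrow> nat"
  assume x: "x \<in> profiles Theta0 (n - 1)" and \<sigma>: "\<sigma> permutes {..<n - 1}"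
  have "(\<Sum>\<pi>\<in>{\<pi>. \<pi> permutes {..<n - 1}}. \<Sum>j<n. h j (perm_list \<pi> (perm_list \<sigma> x)))
      = (\<Sum>\<pi>\<in>{\<pi>. \<pi> permutes {..<n - 1}}. \<Sum>j<n. h j (perm_list (\<pi> \<circ> \<sigma>) x))"
    by (rule sum.cong[OF refl]) (use \<sigma> x in \<open>simp add: perm_list_comp profiles_def\<close>)
  also have "\<dots> = (\<Sum>\<pi>\<in>{\<pi>. \<pi> permutes {..<n - 1}}. \<Sum>j<n. h j (perm_list \<pi> x))"
    by (rule sum_permutations_compose_right[OF \<sigma>, symmetric])
  finally show "sym_h n h (perm_list \<sigma> x) = sym_h n h x"
    by (simp add: sym_h_def)
qed

text \<open>Claim (i): an average of nonpositive revenues is nonpositive.\<close>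

lemma sym_h_feasible:
  assumes "welfare_symmetric Theta0 v n f" "feasible Theta0 n (groves_tax v n f h)"
  shows "feasible Theta0 n (groves_tax v n f (\<lambda>_. sym_h n h))"
  unfolding feasible_def
proof
  fix \<theta> assume \<theta>: "\<theta> \<in> profiles Theta0 n"
  have "perm_avg n (revenue n (groves_tax v n f h)) \<theta> \<le> perm_avg n (\<lambda>_. 0) \<theta>"
    using assms(2) \<theta> unfolding feasible_def by (rule perm_avg_mono)
  then show "revenue n (groves_tax v n f (\<lambda>_. sym_h n h)) \<theta> \<le> 0"
    by (simp add: revenue_sym_h[OF assms(1) \<theta>] perm_avg_def)
qed

text \<open>Claim (ii): averaging both sides of the dominance of h over \<open>h0\<close>, and using that
  \<open>h0\<close> is its own average.\<close>

lemma sym_h_welfare_dominates: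
  assumes "n \<ge> 1" "welfare_symmetric Theta0 v n f" "perm_independent Theta0 n h0"
    and dom: "welfare_dominates Theta0 n (groves_tax v n f h) (groves_tax v n f (\<lambda>_. h0))"
  shows "welfare_dominates Theta0 n (groves_tax v n f (\<lambda>_. sym_h n h)) (groves_tax v n f (\<lambda>_. h0))"
proof -
  let ?R_anon = "revenue n (groves_tax v n f (\<lambda>_. h0))"
  let ?R_h = "revenue n (groves_tax v n f h)"
  have le: "\<forall>\<theta>\<in>profiles Theta0 n. ?R_anon \<theta> \<le> ?R_h \<theta>"
    and lt: "\<exists>\<theta>\<in>profiles Theta0 n. ?R_anon \<theta> < ?R_h \<theta>"
    using dom unfolding welfare_dominates_def by blast+
  have avg: "?R_anon \<theta> = perm_avg n ?R_anon \<theta>"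
    "revenue n (groves_tax v n f (\<lambda>_. sym_h n h)) \<theta> = perm_avg n ?R_h \<theta>"
    if "\<theta> \<in> profiles Theta0 n" for \<theta>
    using assms(1-3) that by (simp_all add: revenue_anonymous revenue_sym_h)
  show ?thesis
    unfolding welfare_dominates_def
    using perm_avg_mono[OF le] perm_avg_strict_mono[OF le] lt by (auto simp: avg)
qed

theorem lemma1:
  fixes D :: "'d set" and Theta0 :: "'t set" and v :: "nat \<Rightarrow> 'd \<Rightarrow> 't \<Rightarrow> real"
    and n :: nat and f :: "'t list \<Rightarrow> 'd" and h :: "nat \<Rightarrow> 't list \<Rightarrow> real"
  assumes "n \<ge> 2"
    and "efficient D Theta0 v n f"
    and "\<forall>\<theta>\<in>profiles Theta0 n. \<forall>\<pi>. \<pi> permutes {..<n} \<longrightarrow>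
           total_util v n (f \<theta>) \<theta> = total_util v n (f (perm_list \<pi> \<theta>)) (perm_list \<pi> \<theta>)"
  shows "perm_independent Theta0 n (sym_h n h)
    \<and> (feasible Theta0 n (groves_tax v n f h) \<longrightarrow>
         feasible Theta0 n (groves_tax v n f (\<lambda>_. sym_h n h)))
    \<and> (\<forall>h0. perm_independent Theta0 n h0 \<and>
          welfare_dominates Theta0 n (groves_tax v n f h) (groves_tax v n f (\<lambda>_. h0)) \<longrightarrow>
          welfare_dominates Theta0 n (groves_tax v n f (\<lambda>_. sym_h n h)) (groves_tax v n f (\<lambda>_. h0)))"
proof -
  have sym: "welfare_symmetric Theta0 v n f"
    using assms(3) by (simp add: welfare_symmetric_def)
  have "n \<ge> 1"
    using assms(1) by simp
  then show ?thesis
    using sym_h_perm_independent sym_h_feasible[OF sym] sym_h_welfare_dominates[OF _ sym] by blast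
qed

end
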